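(* Let $(s_{1,1},\ldots,s_{1,m})=\mathcal{N}(\sigma_1,\ldots,\sigma_m)$ be a Nikishin system and ${\bf n}=(n_0,\ldots,n_m)\in\mathbb{Z}_+^{m+1}$, $|{\bf n}|=n_0+\cdots+n_m$. Consider the linear form \[ \mathcal{L}_{\bf n}=p_0+\sum_{k=1}^m p_k\widehat{s}_{1,k},\qquad \deg p_k\le n_k-1,\ k=0,\ldots,m, \] where the polynomials $p_k$ have real coefficients. Assume that $n_0=\max\{n_0,n_1-1,\ldots,n_m-1\}$. If $\mathcal{L}_{\bf n}$ has at least $|{\bf n}|$ zeros in $\mathbb{C}\setminus\Delta_1$, then the reduced form $p_1+\sum_{k=2}^m p_k\widehat{s}_{2,k}$ has at least $|{\bf n}|-n_0$ zeros in $\mathbb{C}\setminus\Delta_2$.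
   Context: For a bounded interval $\Delta\subset\mathbb{R}$, $\mathcal{M}(\Delta)$ is the class of finite Borel measures of constant sign whose compact support consists of infinitely many points, is contained in $\mathbb{R}$, and has $\Delta$ as the smallest interval containing it. The Cauchy transform of a measure $s$ is $\widehat{s}(z)=\int\frac{ds(x)}{z-x}$. Nikishin system: let $\Delta_1,\ldots,\Delta_m$ be bounded real intervals with $\Delta_j\cap\Delta_{j+1}=\emptyset$ for $j=1,\ldots,m-1$, and $\sigma_j\in\mathcal{M}(\Delta_j)$ with $\mathrm{Co}(\operatorname{supp}\sigma_j)=\Delta_j$. For $1\le j\le k\le m$ define $s_{j,j}=\sigma_j$ and recursively $ds_{j,k}(x)=\widehat{s}_{j+1,k}(x)\,d\sigma_j(x)$ for $j<k$. Then $\mathcal{N}(\sigma_1,\ldots,\sigma_m)=(s_{1,1},\ldots,s_{1,m})$. When $m=1$, the reduced form is just $p_1$ and $\Delta_2$ is understood to be empty. *)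

theory Defs
  imports "HOL-Analysis.Analysis" "HOL-Computational_Algebra.Polynomial"
begin

definition msupp :: "real measure \<Rightarrow> real set" where
  "msupp M = {x. \<forall>e>0. emeasure M (ball x e) \<noteq> 0}"

text \<open>A measure of constant sign is represented as a sign c (1 or -1) times a finite
  positive Borel measure M.  The class M(Delta) for Delta = [a,b]:\<close>
definition in_class_M :: "real measure \<Rightarrow> real \<Rightarrow> real set \<Rightarrow> bool" where
  "in_class_M M c \<Delta> \<longleftrightarrow> sets M = sets borel \<and> finite_measure M \<and> (c = 1 \<or> c = -1) \<and>
     compact (msupp M) \<and> infinite (msupp M) \<and> convex hull (msupp M) = \<Delta>"

text \<open>Cauchy transforms of the measures s_{j,k} of the Nikishin system generated by
  sigma_j = c j * mu j:  nik mu c j k z is \<open>\<hat>s_{j,k}(z)\<close>, where s_{j,j} = sigma_j and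
  d s_{j,k}(x) = \<open>\<hat>s_{j+1,k}(x)\<close> d sigma_j(x) for j < k.\<close>
function nik :: "(nat \<Rightarrow> real measure) \<Rightarrow> (nat \<Rightarrow> real) \<Rightarrow> nat \<Rightarrow> nat \<Rightarrow> complex \<Rightarrow> complex" where
  "nik \<mu> c j k z =
     (if j < k then
        complex_of_real (c j) *
          (LINT x|\<mu> j. nik \<mu> c (Suc j) k (complex_of_real x) / (z - complex_of_real x))
      else complex_of_real (c j) * (LINT x|\<mu> j. 1 / (z - complex_of_real x)))"
  by auto
termination by (relation "Wellfounded.measure (\<lambda>(\<mu>,c,j,k,z). k - j)") auto

definition at_least_zeros :: "(complex \<Rightarrow> complex) \<Rightarrow> complex set \<Rightarrow> nat \<Rightarrow> bool" where
  "at_least_zeros f S N \<longleftrightarrow> (\<exists>Z mult. finite Z \<and> Z \<subseteq> S \<and> N \<le> (\<Sum>z\<in>Z. mult z) \<and>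
      (\<forall>z\<in>Z. \<forall>l<mult z. (deriv ^^ l) f z = 0))"

definition cpoly :: "real poly \<Rightarrow> complex \<Rightarrow> complex" where
  "cpoly p z = poly (map_poly complex_of_real p) z"

end

(*
  Choose a real polynomial w of degree at least |n| vanishing, with multiplicities, at the zeros
  of L_n outside Delta_1 and at their conjugates. With sigma_1 = c_1 mu_1, each s_{1,k}^ is the
  Cauchy transform of a density h_k with respect to mu_1 (h_1 = c_1, h_k = c_1 s_{2,k}^), and
  R = sum_k p_k h_k is c_1 times the reduced form. Since (p(z) - p(x))/(z - x) is a polynomial
  in z, L_n(z) = w(z) integral (R/w)(x)/(z - x) dmu_1(x) + D(z) for a real polynomial D of degree
  less than deg w. D vanishes wherever L_n and w do, hence D = 0. Its coefficients of index at
  least n_0 then say that R/w is orthogonal with respect to mu_1 to all polynomials of degree less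
  than deg w - n_0, so R/w, and with it the reduced form, has at least |n| - n_0 zeros in Delta_1,
  which is disjoint from Delta_2.
*)
theory Submission
  imports Defs "HOL-Complex_Analysis.Complex_Analysis"
begin

section \<open>Measures concentrated on a compact set\<close>

definition concentrated_on :: "real measure \<Rightarrow> real set \<Rightarrow> bool" where
  "concentrated_on M K \<longleftrightarrow>
     finite_measure M \<and> sets M = sets borel \<and> compact K \<and> K \<noteq> {} \<and> emeasure M (- K) = 0"

lemma space_concentrated_on: "concentrated_on M K \<Longrightarrow> space M = UNIV"
  unfolding concentrated_on_def by (metis sets_eq_imp_space_eq space_borel)

lemma AE_concentrated_on:
  assumes "concentrated_on M K"
  shows "AE x in M. x \<in> K"
proof (rule AE_I')
  have "- K \<in> sets M"
    using assms unfolding concentrated_on_def by (simp add: borel_closed compact_imp_closed)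
  thus "- K \<in> null_sets M"
    using assms unfolding concentrated_on_def by (simp add: null_sets_def)
qed auto

lemma measurable_concentrated_on:
  "concentrated_on M K \<Longrightarrow> h \<in> borel_measurable borel \<Longrightarrow> h \<in> borel_measurable M"
  unfolding concentrated_on_def using measurable_cong_sets by blast

lemma integrable_concentrated_on_bounded:
  fixes h :: "real \<Rightarrow> 'b::{banach,second_countable_topology}"
  assumes "concentrated_on M K" "h \<in> borel_measurable borel" "\<forall>x\<in>K. norm (h x) \<le> B"
  shows "integrable M h"
proof -
  interpret finite_measure M
    using assms(1) unfolding concentrated_on_def by blast
  show ?thesis
  proof (rule integrable_const_bound)
    show "AE x in M. norm (h x) \<le> B"
      using AE_concentrated_on[OF assms(1)] by eventually_elim (use assms(3) in blast)
  qed (rule measurable_concentrated_on[OF assms(1,2)])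
qed

lemma norm_integral_concentrated_on_le:
  fixes h :: "real \<Rightarrow> 'b::{banach,second_countable_topology}"
  assumes "concentrated_on M K" "h \<in> borel_measurable borel" "\<forall>x\<in>K. norm (h x) \<le> B"
  shows "norm (integral\<^sup>L M h) \<le> B * measure M UNIV"
proof -
  interpret finite_measure M
    using assms(1) unfolding concentrated_on_def by blast
  have "norm (integral\<^sup>L M h) \<le> (\<integral>x. norm (h x) \<partial>M)"
    by simp
  also have "\<dots> \<le> (\<integral>x. B \<partial>M)"
  proof (rule integral_mono_AE)
    show "integrable M (\<lambda>x. norm (h x))"
      using integrable_concentrated_on_bounded[OF assms] by simp
    show "AE x in M. norm (h x) \<le> B"
      using AE_concentrated_on[OF assms(1)] by eventually_elim (use assms(3) in blast)
  qed simp
  also have "\<dots> = B * measure M UNIV"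
    using space_concentrated_on[OF assms(1)] by simp
  finally show ?thesis .
qed

lemma integrable_concentrated_on_continuous:
  fixes h :: "real \<Rightarrow> 'b::{banach,second_countable_topology}"
  assumes "concentrated_on M K" "h \<in> borel_measurable borel" "continuous_on K h"
  shows "integrable M h"
proof -
  obtain B where "\<And>x. x \<in> K \<Longrightarrow> norm (h x) \<le> B"
    using continuous_on_compact_bound assms unfolding concentrated_on_def by metis
  thus ?thesis
    using integrable_concentrated_on_bounded[OF assms(1,2)] by blast
qed

lemma msupp_subset_if_in_class_M: "in_class_M M s \<Delta> \<Longrightarrow> msupp M \<subseteq> \<Delta>"
  unfolding in_class_M_def using hull_subset by metis

lemma in_class_M_concentrated_on:
  assumes "in_class_M M s {a..b}"
  shows "concentrated_on M {a..b}"
proof -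
  note hyps = assms[unfolded in_class_M_def]
  have supp: "msupp M \<subseteq> {a..b}"
    using assms by (rule msupp_subset_if_in_class_M)
  have "{a..b} \<noteq> {}"
    using supp hyps by (metis finite.emptyI subset_empty)
  define F where "F = {ball x e | x e. e > 0 \<and> emeasure M (ball x e) = 0}"
  obtain F' where F': "F' \<subseteq> F" "countable F'" "\<Union>F' = \<Union>F"
    using Lindelof[of F] unfolding F_def by blast
  have open_sets: "\<And>S. open S \<Longrightarrow> S \<in> sets M"
    using hyps by (simp add: borel_open)
  have "\<Union>F' \<in> null_sets M"
  proof (rule null_sets_UN'[OF F'(2), of id, simplified])
    fix S assume "S \<in> F'"
    then obtain x e where "S = ball x e" "emeasure M (ball x e) = 0"
      using F'(1) unfolding F_def by blast
    thus "S \<in> null_sets M"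
      using open_sets by auto
  qed
  moreover have "- {a..b} \<subseteq> \<Union>F'"
  proof
    fix x assume "x \<in> - {a..b}"
    hence "x \<notin> msupp M"
      using supp by blast
    then obtain e where "e > 0" "emeasure M (ball x e) = 0"
      unfolding msupp_def by auto
    thus "x \<in> \<Union>F'"
      unfolding F'(3) F_def by (auto intro!: exI[of _ "ball x e"])
  qed
  moreover have "- {a..b} \<in> sets M"
    using open_sets by (simp add: open_Compl)
  ultimately have "emeasure M (- {a..b}) = 0"
    using null_sets_subset by blast
  thus ?thesis
    unfolding concentrated_on_def using hyps \<open>{a..b} \<noteq> {}\<close> by auto
qed

section \<open>Cauchy transforms\<close>

definition cauchy_transform :: "real measure \<Rightarrow> (real \<Rightarrow> complex) \<Rightarrow> complex \<Rightarrow> complex" where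
  "cauchy_transform M f z = (\<integral>x. f x / (z - complex_of_real x) \<partial>M)"

lemma compact_of_real_image_dist_pos:
  assumes "compact K" "K \<noteq> {}" "z \<notin> complex_of_real ` K"
  obtains d where "d > 0" "\<And>x. x \<in> K \<Longrightarrow> d \<le> norm (z - complex_of_real x)"
proof
  have "closed (complex_of_real ` K)"
    using assms(1) by (intro compact_imp_closed compact_continuous_image continuous_intros)
  thus "infdist z (complex_of_real ` K) > 0"
    using assms by (intro infdist_pos_not_in_closed) auto
  show "infdist z (complex_of_real ` K) \<le> norm (z - complex_of_real x)" if "x \<in> K" for x
    using that by (metis dist_norm image_eqI infdist_le)
qed

lemma norm_divide_le:
  fixes a b :: complex
  assumes "norm a \<le> B" "e \<le> norm b" "0 < e"
  shows "norm (a / b) \<le> B / e"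
  unfolding norm_divide using assms by (intro frac_le) (auto intro: order_trans[OF norm_ge_zero])

lemma cauchy_transform_diff_quotient_bound:
  fixes y z :: complex
  assumes M: "concentrated_on M K" and f: "f \<in> borel_measurable borel"
    and B: "\<And>x. x \<in> K \<Longrightarrow> norm (f x) \<le> B"
    and d: "d > 0" "\<And>x. x \<in> K \<Longrightarrow> d \<le> norm (z - complex_of_real x)"
    and y: "norm (y - z) < d / 2" "y \<noteq> z"
  shows "norm ((cauchy_transform M f y - cauchy_transform M f z) / (y - z)
                + (\<integral>x. f x / (z - complex_of_real x)^2 \<partial>M))
         \<le> 2 * B * measure M UNIV / d^3 * norm (y - z)"
proof -
  have dy: "d / 2 \<le> norm (y - complex_of_real x)" if "x \<in> K" for x
    using d(2)[OF that] y(1) norm_triangle_ineq4[of "y - complex_of_real x" "y - z"] by simp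
  have integrable: "integrable M (\<lambda>x. f x / (u - complex_of_real x) ^ k)"
    if "\<And>x. x \<in> K \<Longrightarrow> e \<le> norm (u - complex_of_real x)" "e > 0" for u e k
  proof (rule integrable_concentrated_on_bounded[OF M, where B = "B / e ^ k"])
    show "(\<lambda>x. f x / (u - complex_of_real x) ^ k) \<in> borel_measurable borel"
      using f by measurable
    show "\<forall>x\<in>K. norm (f x / (u - complex_of_real x) ^ k) \<le> B / e ^ k"
      using that B by (auto intro!: norm_divide_le power_mono simp: norm_power)
  qed
  define \<phi> where "\<phi> x = (f x / (y - complex_of_real x) - f x / (z - complex_of_real x)) / (y - z)
      + f x / (z - complex_of_real x)^2" for x
  have "(cauchy_transform M f y - cauchy_transform M f z) / (y - z)
          + (\<integral>x. f x / (z - complex_of_real x)^2 \<partial>M) = integral\<^sup>L M \<phi>"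
    using integrable[of "d/2" y 1] integrable[of d z 1] integrable[of d z 2] dy d
    unfolding \<phi>_def cauchy_transform_def by simp
  also have "norm \<dots> \<le> B * norm (y - z) / (d / 2 * d^2) * measure M UNIV"
  proof (rule norm_integral_concentrated_on_le[OF M])
    show "\<phi> \<in> borel_measurable borel"
      unfolding \<phi>_def using f by measurable
    show "\<forall>x\<in>K. norm (\<phi> x) \<le> B * norm (y - z) / (d / 2 * d^2)"
    proof
      fix x assume x: "x \<in> K"
      define u v where "u = y - complex_of_real x" and "v = z - complex_of_real x"
      have "u \<noteq> 0" "v \<noteq> 0" "u - v \<noteq> 0"
        using dy[OF x] d(2)[OF x] d(1) y(2) unfolding u_def v_def by auto
      hence "(f x / u - f x / v) / (u - v) + f x / v^2 = f x * (u - v) / (u * v^2)"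
        by (simp add: field_simps power2_eq_square)
      hence "\<phi> x = f x * (y - z) / ((y - complex_of_real x) * (z - complex_of_real x)^2)"
        unfolding \<phi>_def u_def v_def by simp
      also have "norm \<dots> \<le> B * norm (y - z) / (d / 2 * d^2)"
      proof (rule norm_divide_le)
        show "norm (f x * (y - z)) \<le> B * norm (y - z)"
          unfolding norm_mult using B[OF x] by (rule mult_right_mono) simp
        show "d / 2 * d^2 \<le> norm ((y - complex_of_real x) * (z - complex_of_real x)^2)"
          unfolding norm_mult norm_power using dy[OF x] d(2)[OF x] d(1)
          by (intro mult_mono power_mono) auto
      qed (use d(1) in simp)
      finally show "norm (\<phi> x) \<le> B * norm (y - z) / (d / 2 * d^2)" .
    qed
  qed
  also have "\<dots> = 2 * B * measure M UNIV / d^3 * norm (y - z)"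
    using d(1) by (simp add: field_simps power3_eq_cube power2_eq_square)
  finally show ?thesis .
qed

lemma cauchy_transform_has_field_derivative:
  assumes M: "concentrated_on M K" and f: "f \<in> borel_measurable borel"
    and B: "\<And>x. x \<in> K \<Longrightarrow> norm (f x) \<le> B" and z: "z \<notin> complex_of_real ` K"
  shows "(cauchy_transform M f has_field_derivative
            - (\<integral>x. f x / (z - complex_of_real x)^2 \<partial>M)) (at z)"
proof -
  obtain d where d: "d > 0" "\<And>x. x \<in> K \<Longrightarrow> d \<le> norm (z - complex_of_real x)"
    using compact_of_real_image_dist_pos[OF _ _ z] M unfolding concentrated_on_def by blast
  define C where "C = 2 * B * measure M UNIV / d^3"
  define D where "D = - (\<integral>x. f x / (z - complex_of_real x)^2 \<partial>M)"
  have "((\<lambda>y. (cauchy_transform M f y - cauchy_transform M f z) / (y - z) - D) \<longlongrightarrow> 0) (at z)"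
  proof (rule Lim_null_comparison)
    show "\<forall>\<^sub>F y in at z. norm ((cauchy_transform M f y - cauchy_transform M f z) / (y - z) - D)
                          \<le> C * norm (y - z)"
      unfolding eventually_at C_def D_def dist_norm
      using cauchy_transform_diff_quotient_bound[OF M f B d] d(1)
      by (intro exI[of _ "d/2"]) auto
    have "((\<lambda>y. C * norm (y - z)) \<longlongrightarrow> C * norm (z - z)) (at z)"
      by (intro tendsto_intros)
    thus "((\<lambda>y. C * norm (y - z)) \<longlongrightarrow> 0) (at z)"
      by simp
  qed
  hence "((\<lambda>y. (cauchy_transform M f y - cauchy_transform M f z) / (y - z)) \<longlongrightarrow> D) (at z)"
    by (rule LIM_zero_cancel)
  thus ?thesis
    unfolding D_def has_field_derivative_iff .
qed

lemma holomorphic_on_cauchy_transform: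
  assumes "concentrated_on M K" "f \<in> borel_measurable borel" "continuous_on K f"
  shows "cauchy_transform M f holomorphic_on - complex_of_real ` K"
proof -
  obtain B where "\<And>x. x \<in> K \<Longrightarrow> norm (f x) \<le> B"
    using continuous_on_compact_bound assms unfolding concentrated_on_def by metis
  thus ?thesis
    using cauchy_transform_has_field_derivative[OF assms(1,2)]
    unfolding holomorphic_on_def field_differentiable_def
    by (metis ComplD field_differentiable_at_within field_differentiable_def)
qed

lemma borel_measurable_cauchy_transform_of_real:
  assumes "finite_measure M" "sets M = sets borel" "f \<in> borel_measurable borel"
  shows "(\<lambda>x. cauchy_transform M f (complex_of_real x)) \<in> borel_measurable borel"
proof -
  interpret finite_measure M by fact
  have "(\<lambda>(x, y). f y / (complex_of_real x - complex_of_real y)) \<in> borel_measurable (borel \<Otimes>\<^sub>M borel)"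
    using assms(3) by measurable
  hence "(\<lambda>(x, y). f y / (complex_of_real x - complex_of_real y)) \<in> borel_measurable (borel \<Otimes>\<^sub>M M)"
    using measurable_cong_sets[OF sets_pair_measure_cong[OF refl assms(2)] refl] by blast
  from borel_measurable_lebesgue_integral[OF this] show ?thesis
    unfolding cauchy_transform_def by simp
qed

lemma Im_cauchy_transform_of_real:
  assumes "\<And>y. Im (f y) = 0"
  shows "Im (cauchy_transform M f (complex_of_real x)) = 0"
proof -
  have "f y / (complex_of_real x - complex_of_real y) = of_real (Re (f y) / (x - y))" for y
    using assms[of y] by (simp add: complex_eq_iff)
  hence "cauchy_transform M f (complex_of_real x) = of_real (\<integral>y. Re (f y) / (x - y) \<partial>M)"
    unfolding cauchy_transform_def by (simp only: integral_complex_of_real)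
  thus ?thesis
    by simp
qed

lemma cpoly_of_real: "cpoly p (complex_of_real x) = complex_of_real (poly p x)"
  unfolding cpoly_def poly_altdef by (simp add: degree_map_poly coeff_map_poly)

lemma cpoly_add: "cpoly (p + q) z = cpoly p z + cpoly q z"
proof -
  have "map_poly complex_of_real (p + q) = map_poly of_real p + map_poly of_real q"
    by (intro poly_eqI) (simp add: coeff_map_poly)
  thus ?thesis
    unfolding cpoly_def by simp
qed

lemma cpoly_diff: "cpoly (p - q) z = cpoly p z - cpoly q z"
proof -
  have "map_poly complex_of_real (p - q) = map_poly of_real p - map_poly of_real q"
    by (intro poly_eqI) (simp add: coeff_map_poly)
  thus ?thesis
    unfolding cpoly_def by simp
qed

lemma cpoly_sum: "cpoly (\<Sum>i\<in>A. f i) z = (\<Sum>i\<in>A. cpoly (f i) z)"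
  by (induction A rule: infinite_finite_induct) (simp_all add: cpoly_add cpoly_def[of 0])

lemma cpoly_monom: "cpoly (monom c n) z = complex_of_real c * z ^ n"
  unfolding cpoly_def by (simp add: map_poly_monom poly_monom)

lemma holomorphic_on_cpoly [holomorphic_intros]: "cpoly p holomorphic_on A"
  unfolding cpoly_def[abs_def] by (intro holomorphic_intros)

lemma borel_measurable_poly [measurable]: "poly (p :: real poly) \<in> borel_measurable borel"
  by (intro borel_measurable_continuous_onI continuous_intros)

text \<open>\<open>diff_quot_coeff s j x\<close> is the coefficient of \<open>z^j\<close> in the polynomial
  \<open>(s z - s x) / (z - x)\<close>, and \<open>cauchy_remainder M s f\<close> is the polynomial
  \<open>\<integral> f x (s z - s x) / (z - x) dM(x)\<close> of degree below \<open>degree s\<close>.\<close>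

definition diff_quot_coeff :: "real poly \<Rightarrow> nat \<Rightarrow> real \<Rightarrow> real" where
  "diff_quot_coeff s j x = (\<Sum>i\<in>{Suc j..degree s}. coeff s i * x ^ (i - Suc j))"

definition cauchy_remainder :: "real measure \<Rightarrow> real poly \<Rightarrow> (real \<Rightarrow> real) \<Rightarrow> real poly" where
  "cauchy_remainder M s f = (\<Sum>j<degree s. monom (\<integral>x. f x * diff_quot_coeff s j x \<partial>M) j)"

lemma continuous_on_diff_quot_coeff [continuous_intros]: "continuous_on A (diff_quot_coeff s j)"
  unfolding diff_quot_coeff_def by (intro continuous_intros)

lemma borel_measurable_diff_quot_coeff [measurable]: "diff_quot_coeff s j \<in> borel_measurable borel"
  using continuous_on_diff_quot_coeff[of UNIV] by (rule borel_measurable_continuous_onI)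

lemma cpoly_diff_eq_diff_quot:
  "cpoly s z - complex_of_real (poly s x)
     = (z - complex_of_real x) * (\<Sum>j<degree s. z ^ j * complex_of_real (diff_quot_coeff s j x))"
proof -
  define d where "d = degree s"
  have "cpoly s z - complex_of_real (poly s x)
          = (\<Sum>i\<le>d. complex_of_real (coeff s i) * (z ^ i - complex_of_real x ^ i))"
    unfolding cpoly_def poly_altdef d_def
    by (simp add: degree_map_poly coeff_map_poly sum_subtractf right_diff_distrib)
  also have "\<dots> = (z - complex_of_real x) *
      (\<Sum>i\<le>d. \<Sum>j<i. complex_of_real (coeff s i) * complex_of_real x ^ (i - Suc j) * z ^ j)"
    by (simp add: power_diff_sumr2 sum_distrib_left mult_ac)
  also have "(\<Sum>i\<le>d. \<Sum>j<i. complex_of_real (coeff s i) * complex_of_real x ^ (i - Suc j) * z ^ j)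
      = (\<Sum>j<d. \<Sum>i\<in>{Suc j..d}. complex_of_real (coeff s i) * complex_of_real x ^ (i - Suc j) * z ^ j)"
    by (rule sum.nested_swap')
  also have "\<dots> = (\<Sum>j<d. z ^ j * complex_of_real (diff_quot_coeff s j x))"
    unfolding diff_quot_coeff_def d_def by (simp add: sum_distrib_left mult_ac)
  finally show ?thesis
    unfolding d_def .
qed

lemma coeff_cauchy_remainder:
  "coeff (cauchy_remainder M s f) i =
     (if i < degree s then \<integral>x. f x * diff_quot_coeff s i x \<partial>M else 0)"
  unfolding cauchy_remainder_def by (simp add: coeff_sum coeff_monom)

lemma cpoly_cauchy_remainder:
  "cpoly (cauchy_remainder M s f) z
     = (\<Sum>j<degree s. z ^ j * complex_of_real (\<integral>x. f x * diff_quot_coeff s j x \<partial>M))"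
  unfolding cauchy_remainder_def cpoly_sum cpoly_monom by (simp add: mult.commute)

lemma integrable_cauchy_kernel:
  assumes "concentrated_on M K" "f \<in> borel_measurable borel" "continuous_on K f"
    and "z \<notin> complex_of_real ` K"
  shows "integrable M (\<lambda>x. f x / (z - complex_of_real x))"
proof (rule integrable_concentrated_on_continuous[OF assms(1)])
  show "(\<lambda>x. f x / (z - complex_of_real x)) \<in> borel_measurable borel"
    using assms(2) by measurable
  show "continuous_on K (\<lambda>x. f x / (z - complex_of_real x))"
    using assms(3,4) by (intro continuous_intros) auto
qed

lemma cauchy_transform_mult_cpoly:
  assumes M: "concentrated_on M K" and f: "f \<in> borel_measurable borel" "continuous_on K f"
    and z: "z \<notin> complex_of_real ` K"
  shows "cpoly s z * cauchy_transform M (\<lambda>x. complex_of_real (f x)) z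
       = cauchy_transform M (\<lambda>x. complex_of_real (f x * poly s x)) z
         + cpoly (cauchy_remainder M s f) z"
proof -
  define r where "r x j = z ^ j * complex_of_real (f x * diff_quot_coeff s j x)" for x j
  have integrable_r: "integrable M (\<lambda>x. r x j)" for j
  proof (rule integrable_concentrated_on_continuous[OF M])
    show "(\<lambda>x. r x j) \<in> borel_measurable borel"
      unfolding r_def using f(1) by measurable
    show "continuous_on K (\<lambda>x. r x j)"
      unfolding r_def using f(2) by (intro continuous_intros)
  qed
  have integrable_main: "integrable M (\<lambda>x. complex_of_real (f x * poly s x) / (z - complex_of_real x))"
  proof (rule integrable_cauchy_kernel[OF M _ _ z])
    show "(\<lambda>x. complex_of_real (f x * poly s x)) \<in> borel_measurable borel"
      using f(1) by measurable
    show "continuous_on K (\<lambda>x. complex_of_real (f x * poly s x))"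
      using f(2) by (intro continuous_intros)
  qed
  have "cpoly s z * cauchy_transform M (\<lambda>x. complex_of_real (f x)) z
      = (\<integral>x. cpoly s z * (complex_of_real (f x) / (z - complex_of_real x)) \<partial>M)"
    unfolding cauchy_transform_def by (simp only: integral_mult_right_zero)
  also have "\<dots> = (\<integral>x. complex_of_real (f x * poly s x) / (z - complex_of_real x)
                        + (\<Sum>j<degree s. r x j) \<partial>M)"
  proof (rule integral_cong_AE)
    show "AE x in M. cpoly s z * (complex_of_real (f x) / (z - complex_of_real x))
        = complex_of_real (f x * poly s x) / (z - complex_of_real x) + (\<Sum>j<degree s. r x j)"
      using AE_concentrated_on[OF M]
    proof eventually_elim
      case (elim x)
      hence "z - complex_of_real x \<noteq> 0"
        using z by auto
      thus ?case
        using cpoly_diff_eq_diff_quot[of s z x]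
        unfolding r_def by (simp add: field_simps sum_distrib_left)
    qed
    show "(\<lambda>x. cpoly s z * (complex_of_real (f x) / (z - complex_of_real x))) \<in> borel_measurable M"
      by (rule measurable_concentrated_on[OF M]) (use f(1) in measurable)
    show "(\<lambda>x. complex_of_real (f x * poly s x) / (z - complex_of_real x) + (\<Sum>j<degree s. r x j))
            \<in> borel_measurable M"
      using integrable_main integrable_r by (intro borel_measurable_integrable) auto
  qed
  also have "\<dots> = cauchy_transform M (\<lambda>x. complex_of_real (f x * poly s x)) z
                   + (\<Sum>j<degree s. \<integral>x. r x j \<partial>M)"
    unfolding cauchy_transform_def using integrable_main integrable_r by simp
  also have "(\<Sum>j<degree s. \<integral>x. r x j \<partial>M) = cpoly (cauchy_remainder M s f) z"
    unfolding cpoly_cauchy_remainder r_def by (simp only: integral_mult_right_zero integral_complex_of_real)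
  finally show ?thesis .
qed

lemma cauchy_transform_combination:
  fixes q :: "'i \<Rightarrow> real poly" and h :: "'i \<Rightarrow> real \<Rightarrow> real"
  assumes M: "concentrated_on M K"
    and h: "\<And>i. i \<in> I \<Longrightarrow> h i \<in> borel_measurable borel" "\<And>i. i \<in> I \<Longrightarrow> continuous_on K (h i)"
    and w: "\<And>x. x \<in> K \<Longrightarrow> poly w x \<noteq> 0"
    and z: "z \<notin> complex_of_real ` K"
  defines "g \<equiv> \<lambda>x. (\<Sum>i\<in>I. poly (q i) x * h i x) / poly w x"
  shows "(\<Sum>i\<in>I. cpoly (q i) z * cauchy_transform M (\<lambda>x. complex_of_real (h i x)) z)
       = cpoly w z * cauchy_transform M (\<lambda>x. complex_of_real (g x)) z
         + cpoly ((\<Sum>i\<in>I. cauchy_remainder M (q i) (h i)) - cauchy_remainder M w g) z"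
proof -
  have g: "g \<in> borel_measurable borel" "continuous_on K g"
    unfolding g_def using h w by (measurable, auto intro!: continuous_intros)
  have "(\<Sum>i\<in>I. cpoly (q i) z * cauchy_transform M (\<lambda>x. complex_of_real (h i x)) z)
      = (\<Sum>i\<in>I. cauchy_transform M (\<lambda>x. complex_of_real (h i x * poly (q i) x)) z)
        + cpoly (\<Sum>i\<in>I. cauchy_remainder M (q i) (h i)) z"
    using cauchy_transform_mult_cpoly[OF M h z] by (simp add: sum.distrib cpoly_sum)
  also have "(\<Sum>i\<in>I. cauchy_transform M (\<lambda>x. complex_of_real (h i x * poly (q i) x)) z)
      = (\<integral>x. (\<Sum>i\<in>I. complex_of_real (h i x * poly (q i) x) / (z - complex_of_real x)) \<partial>M)"
    unfolding cauchy_transform_def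
  proof (rule Bochner_Integration.integral_sum[symmetric])
    show "integrable M (\<lambda>x. complex_of_real (h i x * poly (q i) x) / (z - complex_of_real x))"
      if "i \<in> I" for i
    proof (rule integrable_cauchy_kernel[OF M _ _ z])
      show "(\<lambda>x. complex_of_real (h i x * poly (q i) x)) \<in> borel_measurable borel"
        using h(1)[OF that] by measurable
      show "continuous_on K (\<lambda>x. complex_of_real (h i x * poly (q i) x))"
        using h(2)[OF that] by (intro continuous_intros)
    qed
  qed
  also have "\<dots> = cauchy_transform M (\<lambda>x. complex_of_real (g x * poly w x)) z"
    unfolding cauchy_transform_def
  proof (rule integral_cong_AE)
    show "AE x in M. (\<Sum>i\<in>I. complex_of_real (h i x * poly (q i) x) / (z - complex_of_real x))
        = complex_of_real (g x * poly w x) / (z - complex_of_real x)"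
      using AE_concentrated_on[OF M]
      by eventually_elim (simp add: g_def w sum_divide_distrib[symmetric] mult.commute)
  qed (use h g in \<open>auto intro!: measurable_concentrated_on[OF M]\<close>)
  also have "\<dots> = cpoly w z * cauchy_transform M (\<lambda>x. complex_of_real (g x)) z
                   - cpoly (cauchy_remainder M w g) z"
    using cauchy_transform_mult_cpoly[OF M g z, of w] by simp
  finally show ?thesis
    by (simp add: cpoly_diff)
qed

section \<open>Zeros counted with multiplicity\<close>

definition vanishes_to_order :: "(complex \<Rightarrow> complex) \<Rightarrow> complex \<Rightarrow> nat \<Rightarrow> bool" where
  "vanishes_to_order f z k \<longleftrightarrow> (\<forall>l<k. (deriv ^^ l) f z = 0)"

lemma at_least_zeros_iff_vanishes_to_order:
  "at_least_zeros f S N \<longleftrightarrow>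
     (\<exists>Z mult. finite Z \<and> Z \<subseteq> S \<and> N \<le> (\<Sum>z\<in>Z. mult z) \<and> (\<forall>z\<in>Z. vanishes_to_order f z (mult z)))"
  unfolding at_least_zeros_def vanishes_to_order_def ..

lemma vanishes_to_order_transform_within_open:
  assumes "f holomorphic_on S" "g holomorphic_on S" "open S" "z \<in> S" "\<And>w. w \<in> S \<Longrightarrow> f w = g w"
  shows "vanishes_to_order f z k \<longleftrightarrow> vanishes_to_order g z k"
  unfolding vanishes_to_order_def using higher_deriv_transform_within_open[OF assms] by simp

lemma vanishes_to_order_mult_right:
  assumes "vanishes_to_order f z k" "f holomorphic_on S" "g holomorphic_on S" "open S" "z \<in> S"
  shows "vanishes_to_order (\<lambda>w. f w * g w) z k"
  unfolding vanishes_to_order_def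
proof (intro allI impI)
  fix l assume "l < k"
  hence "(deriv ^^ i) f z = 0" if "i \<in> {0..l}" for i
    using assms(1) that unfolding vanishes_to_order_def by auto
  thus "(deriv ^^ l) (\<lambda>w. f w * g w) z = 0"
    using higher_deriv_mult[OF assms(2-5)] by simp
qed

lemma vanishes_to_order_diff:
  assumes "vanishes_to_order f z k" "vanishes_to_order g z k"
    "f holomorphic_on S" "g holomorphic_on S" "open S" "z \<in> S"
  shows "vanishes_to_order (\<lambda>w. f w - g w) z k"
  using assms higher_deriv_diff[OF assms(3-6)] unfolding vanishes_to_order_def by simp

lemma higher_deriv_poly: "(deriv ^^ i) (poly p) = poly ((pderiv ^^ i) (p :: complex poly))"
proof (induction i)
  case (Suc i)
  have "deriv (poly ((pderiv ^^ i) p)) = poly (pderiv ((pderiv ^^ i) p))"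
    by (rule ext, rule DERIV_imp_deriv, rule poly_DERIV)
  thus ?case
    using Suc by simp
qed simp

lemma order_ge_iff_higher_pderiv:
  fixes p :: "'a::{idom,semiring_char_0} poly"
  assumes "p \<noteq> 0"
  shows "k \<le> order a p \<longleftrightarrow> (\<forall>i<k. poly ((pderiv ^^ i) p) a = 0)"
  using assms
proof (induction k arbitrary: p)
  case (Suc k)
  show ?case
  proof (cases "poly p a = 0")
    case True
    have "pderiv p \<noteq> 0"
      using Suc.prems True pderiv_iszero by force
    hence "k \<le> order a (pderiv p) \<longleftrightarrow> (\<forall>i<k. poly ((pderiv ^^ Suc i) p) a = 0)"
      using Suc.IH by (simp add: funpow_Suc_right del: funpow.simps)
    also have "\<dots> \<longleftrightarrow> (\<forall>i<Suc k. poly ((pderiv ^^ i) p) a = 0)"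
      using True by (auto simp: less_Suc_eq_0_disj)
    finally show ?thesis
      using order_pderiv[OF Suc.prems True] by simp
  next
    case False
    thus ?thesis
      using order_0I[OF False] by force
  qed
qed simp

lemma vanishes_to_order_cpoly_iff:
  assumes "p \<noteq> 0"
  shows "vanishes_to_order (cpoly p) z k \<longleftrightarrow> k \<le> order z (map_poly complex_of_real p)"
  using assms
  by (simp add: vanishes_to_order_def cpoly_def[abs_def] higher_deriv_poly order_ge_iff_higher_pderiv
      map_poly_eq_0_iff)

lemma order_cnj:
  fixes p :: "complex poly"
  assumes "p \<noteq> 0" "map_poly cnj p = p"
  shows "order (cnj z) p = order z p"
proof -
  have "map_poly cnj ((pderiv ^^ i) p) = (pderiv ^^ i) p" for i
  proof (rule poly_eqI)
    fix n
    have "cnj (coeff p (n + i)) = coeff p (n + i)"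
      using arg_cong[OF assms(2), of "\<lambda>q. coeff q (n + i)"] by (simp add: coeff_map_poly)
    thus "coeff (map_poly cnj ((pderiv ^^ i) p)) n = coeff ((pderiv ^^ i) p) n"
      by (simp add: coeff_map_poly coeff_higher_pderiv pochhammer_of_nat[symmetric])
  qed
  hence "poly ((pderiv ^^ i) p) (cnj z) = cnj (poly ((pderiv ^^ i) p) z)" for i
    by (metis poly_cnj)
  hence "k \<le> order (cnj z) p \<longleftrightarrow> k \<le> order z p" for k
    using assms(1) by (simp add: order_ge_iff_higher_pderiv)
  thus ?thesis
    by (meson le_antisym order_refl)
qed

lemma vanishes_to_order_decomposition:
  assumes "open S" "z \<in> S" "f holomorphic_on S" "p holomorphic_on S" "G holomorphic_on S"
    "r holomorphic_on S" "\<And>u. u \<in> S \<Longrightarrow> f u = p u * G u + r u"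
    "vanishes_to_order f z k" "vanishes_to_order p z k"
  shows "vanishes_to_order r z k"
proof -
  have "vanishes_to_order (\<lambda>u. f u - p u * G u) z k"
    using assms by (intro vanishes_to_order_diff vanishes_to_order_mult_right holomorphic_intros)
  moreover have "(\<lambda>u. f u - p u * G u) holomorphic_on S"
    using assms by (intro holomorphic_intros)
  ultimately show ?thesis
    using vanishes_to_order_transform_within_open[of "\<lambda>u. f u - p u * G u" S r] assms by simp
qed

lemma at_least_zeros_of_real_zeros:
  assumes "finite F" "complex_of_real ` F \<subseteq> S" "N \<le> card F" "\<And>x. x \<in> F \<Longrightarrow> f (complex_of_real x) = 0"
  shows "at_least_zeros f S N"
  unfolding at_least_zeros_def
proof (intro exI conjI)
  show "N \<le> (\<Sum>z\<in>complex_of_real ` F. 1::nat)"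
    using assms(3) by (simp add: card_image inj_on_def)
qed (use assms in auto)

lemma sum_order_le_degree_on:
  fixes p :: "'a::idom poly"
  assumes "finite U" "p \<noteq> 0"
  shows "(\<Sum>u\<in>U. order u p) \<le> degree p"
proof -
  have "(\<Sum>u\<in>U. order u p) = (\<Sum>u\<in>U \<inter> {x. poly p x = 0}. order u p)"
    using assms by (intro sum.mono_neutral_right) (auto simp: order_0I)
  also have "\<dots> \<le> (\<Sum>u | poly p u = 0. order u p)"
    using assms by (intro sum_mono2 poly_roots_finite) auto
  also have "\<dots> \<le> degree p"
    using assms(2) by (rule sum_order_le_degree)
  finally show ?thesis .
qed

lemma map_poly_of_real_Re_eq:
  fixes p :: "complex poly"
  assumes "map_poly cnj p = p"
  shows "map_poly complex_of_real (map_poly Re p) = p"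
proof (rule poly_eqI)
  fix n
  have "coeff p n \<in> \<real>"
    using arg_cong[OF assms, of "\<lambda>q. coeff q n"] by (simp add: coeff_map_poly Reals_cnj_iff)
  thus "coeff (map_poly complex_of_real (map_poly Re p)) n = coeff p n"
    by (auto simp: coeff_map_poly elim: Reals_cases)
qed

lemma map_poly_cnj_prod_linear_powers:
  assumes "finite U" "cnj ` U = U" "\<And>u. e (cnj u) = e u"
  shows "map_poly cnj (\<Prod>u\<in>U. [:-u, 1:] ^ e u) = (\<Prod>u\<in>U. [:-u, 1:] ^ e u)"
proof -
  have "poly (map_poly cnj (\<Prod>u\<in>U. [:-u, 1:] ^ e u)) z = (\<Prod>u\<in>U. (z - u) ^ e u)" for z
  proof -
    have "poly (map_poly cnj (\<Prod>u\<in>U. [:-u, 1:] ^ e u)) z = (\<Prod>u\<in>U. (z - cnj u) ^ e (cnj u))"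
      by (simp add: poly_prod poly_power assms(3))
    also have "\<dots> = (\<Prod>v\<in>cnj ` U. (z - v) ^ e v)"
      by (subst prod.reindex) (auto intro: inj_onI)
    finally show ?thesis
      unfolding assms(2) .
  qed
  hence "poly (map_poly cnj (\<Prod>u\<in>U. [:-u, 1:] ^ e u)) = poly (\<Prod>u\<in>U. [:-u, 1:] ^ e u)"
    by (simp add: fun_eq_iff poly_prod poly_power del: poly_map_poly_cnj)
  thus ?thesis
    by (simp only: poly_eq_poly_eq_iff)
qed

lemma sum_max_order_cnj_le_degree:
  fixes D :: "real poly"
  assumes "D \<noteq> 0" "finite U" "\<And>u. m u \<le> order u (map_poly complex_of_real D)"
  shows "(\<Sum>u\<in>U. max (m u) (m (cnj u))) \<le> degree D"
proof -
  define Dc where "Dc = map_poly complex_of_real D"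
  have "Dc \<noteq> 0" "map_poly cnj Dc = Dc"
    using assms(1) unfolding Dc_def by (auto simp: map_poly_map_poly o_def map_poly_eq_0_iff)
  hence "max (m u) (m (cnj u)) \<le> order u Dc" for u
    using assms(3) order_cnj unfolding Dc_def by (metis max.bounded_iff)
  hence "(\<Sum>u\<in>U. max (m u) (m (cnj u))) \<le> (\<Sum>u\<in>U. order u Dc)"
    by (intro sum_mono)
  also have "\<dots> \<le> degree D"
    using sum_order_le_degree_on[OF assms(2) \<open>Dc \<noteq> 0\<close>] unfolding Dc_def by (simp add: degree_map_poly)
  finally show ?thesis .
qed

lemma real_poly_with_zeros:
  fixes Z :: "complex set" and mult :: "complex \<Rightarrow> nat"
  assumes "finite Z"
  obtains w :: "real poly"
  where "w \<noteq> 0" "(\<Sum>z\<in>Z. mult z) \<le> degree w"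
    and "\<And>x. poly w x = 0 \<Longrightarrow> complex_of_real x \<in> Z"
    and "\<And>z. z \<in> Z \<Longrightarrow> vanishes_to_order (cpoly w) z (mult z)"
    and "\<And>D. degree D < degree w \<Longrightarrow> (\<And>z. z \<in> Z \<Longrightarrow> vanishes_to_order (cpoly D) z (mult z)) \<Longrightarrow> D = 0"
proof -
  txt \<open>Taking at \<open>u\<close> the larger of the multiplicities prescribed at \<open>u\<close> and \<open>cnj u\<close> makes
    the product real, and every real polynomial with the prescribed zeros has these larger ones.\<close>
  define U where "U = Z \<union> cnj ` Z"
  define m where "m u = (if u \<in> Z then mult u else 0)" for u
  define e where "e u = max (m u) (m (cnj u))" for u
  define wc where "wc = (\<Prod>u\<in>U. [:-u, 1:] ^ e u)"
  define w where "w = map_poly Re wc"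
  have U: "finite U" "cnj ` U = U"
    using assms unfolding U_def by (auto simp: image_Un image_image)
  have "e (cnj u) = e u" for u
    unfolding e_def by (simp add: max.commute)
  hence wc_eq: "map_poly complex_of_real w = wc"
    unfolding w_def wc_def using U by (intro map_poly_of_real_Re_eq map_poly_cnj_prod_linear_powers)
  have wc0: "wc \<noteq> 0"
    unfolding wc_def using U(1) by simp
  have "degree wc = (\<Sum>u\<in>U. e u)"
    unfolding wc_def by (subst degree_prod_eq_sum_degree) (auto simp: degree_linear_power)
  hence deg: "degree w = (\<Sum>u\<in>U. e u)"
    by (simp add: wc_eq[symmetric] degree_map_poly)
  have order_wc: "e u \<le> order u wc" if "u \<in> U" for u
  proof -
    have "[:-u, 1:] ^ e u dvd wc"
      unfolding wc_def using that U(1) by (intro dvd_prodI)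
    thus ?thesis
      using wc0 order_divides by blast
  qed
  show ?thesis
  proof
    show "w \<noteq> 0"
      using wc0 wc_eq by auto
    have "(\<Sum>z\<in>Z. mult z) \<le> (\<Sum>z\<in>Z. e z)"
      by (intro sum_mono) (simp add: e_def m_def)
    also have "\<dots> \<le> degree w"
      unfolding deg U_def using assms by (intro sum_mono2) auto
    finally show "(\<Sum>z\<in>Z. mult z) \<le> degree w" .
    show "complex_of_real x \<in> Z" if "poly w x = 0" for x
    proof -
      have "poly wc (complex_of_real x) = 0"
        using that cpoly_of_real[of w x] by (simp add: cpoly_def wc_eq)
      hence "complex_of_real x \<in> U"
        unfolding wc_def poly_prod poly_power using U(1) by (auto simp: prod_zero_iff)
      thus ?thesis
        unfolding U_def by (metis Un_iff complex_cnj_cnj complex_cnj_complex_of_real imageE)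
    qed
    show "vanishes_to_order (cpoly w) z (mult z)" if "z \<in> Z" for z
    proof -
      have "mult z \<le> e z"
        using that unfolding e_def m_def by simp
      also have "\<dots> \<le> order z wc"
        using order_wc that unfolding U_def by blast
      finally show ?thesis
        unfolding vanishes_to_order_cpoly_iff[OF \<open>w \<noteq> 0\<close>] wc_eq .
    qed
    show "D = 0" if D: "degree D < degree w" "\<And>z. z \<in> Z \<Longrightarrow> vanishes_to_order (cpoly D) z (mult z)"
      for D
    proof (rule ccontr)
      assume "D \<noteq> 0"
      hence "m u \<le> order u (map_poly complex_of_real D)" for u
        using D(2) vanishes_to_order_cpoly_iff unfolding m_def by auto
      hence "degree w \<le> degree D"
        unfolding deg e_def using sum_max_order_cnj_le_degree[OF \<open>D \<noteq> 0\<close> U(1)] by blast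
      thus False
        using D(1) by simp
    qed
  qed
qed

section \<open>Orthogonality and zeros\<close>

lemma continuous_on_Icc_constant_sign:
  fixes g :: "real \<Rightarrow> real"
  assumes "continuous_on {a..b} g" "\<And>x. x \<in> {a<..<b} \<Longrightarrow> g x \<noteq> 0"
  shows "(\<forall>x\<in>{a..b}. 0 \<le> g x) \<or> (\<forall>x\<in>{a..b}. g x \<le> 0)"
proof (rule ccontr)
  assume "\<not> ?thesis"
  then obtain x1 x2 where x: "x1 \<in> {a..b}" "x2 \<in> {a..b}" "g x1 < 0" "0 < g x2"
    by (auto simp: not_le)
  have "continuous_on {min x1 x2..max x1 x2} g"
    using x by (intro continuous_on_subset[OF assms(1)]) auto
  then obtain t where t: "min x1 x2 \<le> t" "t \<le> max x1 x2" "g t = 0"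
    using IVT'[of g x1 0 x2] IVT2'[of g x1 0 x2] x by (cases "x1 \<le> x2") auto
  hence "t \<in> {a<..<b}"
    using x by (cases "t = x1 \<or> t = x2") auto
  thus False
    using assms(2) t(3) by blast
qed

lemma exists_poly_same_sign_extend:
  fixes g :: "real \<Rightarrow> real"
  assumes q: "q \<noteq> 0" "\<forall>x>y. poly q x \<noteq> 0" "\<forall>x\<in>{a..y}. 0 \<le> poly q x * g x"
    and g: "y \<le> b" "continuous_on {y..b} g" "\<And>x. x \<in> {y<..<b} \<Longrightarrow> g x \<noteq> 0"
  shows "\<exists>r. r \<noteq> 0 \<and> degree r \<le> Suc (degree q) \<and> (\<forall>x>b. poly r x \<noteq> 0)
             \<and> (\<forall>x\<in>{a..b}. 0 \<le> poly r x * g x)"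
proof -
  have "(\<forall>x\<in>{y..b}. 0 \<le> poly q x * g x) \<or> (\<forall>x\<in>{y..b}. poly q x * g x \<le> 0)"
  proof (rule continuous_on_Icc_constant_sign)
    show "continuous_on {y..b} (\<lambda>x. poly q x * g x)"
      by (intro continuous_intros g(2))
    show "poly q x * g x \<noteq> 0" if "x \<in> {y<..<b}" for x
      using q(2) g(3)[OF that] that by simp
  qed
  thus ?thesis
  proof
    assume *: "\<forall>x\<in>{y..b}. 0 \<le> poly q x * g x"
    show ?thesis
    proof (intro exI[of _ q] conjI)
      show "\<forall>x\<in>{a..b}. 0 \<le> poly q x * g x"
        using q(3) * by (metis atLeastAtMost_iff nle_le)
      show "\<forall>x>b. poly q x \<noteq> 0"
        using q(2) g(1) by simp
    qed (use q(1) in simp_all)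
  next
    assume *: "\<forall>x\<in>{y..b}. poly q x * g x \<le> 0"
    have prod: "poly ([:y, -1:] * q) x * g x = (y - x) * (poly q x * g x)" for x
      by (simp add: algebra_simps)
    show ?thesis
    proof (intro exI[of _ "[:y, -1:] * q"] conjI)
      show "[:y, -1:] * q \<noteq> 0"
        using q(1) by (simp only: mult_eq_0_iff) simp
      show "degree ([:y, -1:] * q) \<le> Suc (degree q)"
        using q(1) by (subst degree_mult_eq) auto
      show "\<forall>x>b. poly ([:y, -1:] * q) x \<noteq> 0"
        using q(2) g(1) by simp
      show "\<forall>x\<in>{a..b}. 0 \<le> poly ([:y, -1:] * q) x * g x"
      proof
        fix x assume x: "x \<in> {a..b}"
        show "0 \<le> poly ([:y, -1:] * q) x * g x"
        proof (cases "x \<le> y")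
          case True
          thus ?thesis
            unfolding prod using q(3) x by simp
        next
          case False
          thus ?thesis
            unfolding prod using * x by (intro mult_nonpos_nonpos) auto
        qed
      qed
    qed
  qed
qed

text \<open>The condition on \<open>(b, \<infinity>)\<close> keeps the sign of \<open>q\<close> fixed to the right of the last
  point of \<open>F\<close>, which the induction step needs.\<close>

lemma exists_poly_same_sign:
  fixes g :: "real \<Rightarrow> real"
  assumes "finite F" "continuous_on {a..b} g" "\<And>x. x \<in> {a<..<b} - F \<Longrightarrow> g x \<noteq> 0"
  shows "\<exists>q. q \<noteq> 0 \<and> degree q \<le> card F \<and> (\<forall>x>b. poly q x \<noteq> 0) \<and> (\<forall>x\<in>{a..b}. 0 \<le> poly q x * g x)"
  using assms
proof (induction "card F" arbitrary: F b rule: less_induct)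
  case less
  show ?case
  proof (cases "F \<inter> {a<..<b} = {}")
    case True
    hence "g x \<noteq> 0" if "x \<in> {a<..<b}" for x
      using that less.prems(3) by blast
    hence "(\<forall>x\<in>{a..b}. 0 \<le> g x) \<or> (\<forall>x\<in>{a..b}. g x \<le> 0)"
      by (rule continuous_on_Icc_constant_sign[OF less.prems(2)])
    thus ?thesis
    proof
      assume "\<forall>x\<in>{a..b}. 0 \<le> g x"
      thus ?thesis
        by (intro exI[of _ 1]) auto
    next
      assume "\<forall>x\<in>{a..b}. g x \<le> 0"
      thus ?thesis
        by (intro exI[of _ "-1"]) auto
    qed
  next
    case False
    define y where "y = Max (F \<inter> {a<..<b})"
    have y: "y \<in> F" "a < y" "y < b" "\<And>x. x \<in> F \<inter> {a<..<b} \<Longrightarrow> x \<le> y"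
      using Max_in[OF _ False] Max_ge less.prems(1) unfolding y_def by auto
    have card_F: "card F = Suc (card (F - {y}))"
      using card_Suc_Diff1[OF less.prems(1) y(1)] by simp
    hence "card (F - {y}) < card F"
      by simp
    then obtain q where q: "q \<noteq> 0" "degree q \<le> card (F - {y})" "\<forall>x>y. poly q x \<noteq> 0"
      "\<forall>x\<in>{a..y}. 0 \<le> poly q x * g x"
      using less.hyps[of "F - {y}" y] less.prems y by (force intro: continuous_on_subset)
    have "\<exists>r. r \<noteq> 0 \<and> degree r \<le> Suc (degree q) \<and> (\<forall>x>b. poly r x \<noteq> 0)
             \<and> (\<forall>x\<in>{a..b}. 0 \<le> poly r x * g x)"
    proof (rule exists_poly_same_sign_extend[OF q(1,3,4)])
      show "continuous_on {y..b} g"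
        using y by (intro continuous_on_subset[OF less.prems(2)]) auto
      show "g x \<noteq> 0" if "x \<in> {y<..<b}" for x
      proof -
        have "x \<notin> F"
          using that y(2) y(4)[of x] by auto
        thus ?thesis
          using that y(2) less.prems(3)[of x] by auto
      qed
    qed (use y in simp)
    thus ?thesis
      using q(2) card_F by auto
  qed
qed

lemma nonneg_integral_eq_0_imp_vanishes_on_msupp:
  fixes h :: "real \<Rightarrow> real"
  assumes M: "concentrated_on M K" and h: "h \<in> borel_measurable borel" "continuous_on K h"
    and nonneg: "\<And>x. x \<in> K \<Longrightarrow> 0 \<le> h x" and int0: "(\<integral>x. h x \<partial>M) = 0"
    and x0: "x0 \<in> msupp M" "x0 \<in> K"
  shows "h x0 = 0"
proof (rule ccontr)
  assume "h x0 \<noteq> 0"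
  hence pos: "0 < h x0"
    using nonneg[OF x0(2)] by simp
  have "AE x in M. h x = 0"
  proof (subst integral_nonneg_eq_0_iff_AE[symmetric])
    show "integrable M h"
      by (rule integrable_concentrated_on_continuous[OF M h])
    show "AE x in M. 0 \<le> h x"
      using AE_concentrated_on[OF M] by eventually_elim (rule nonneg)
  qed (rule int0)
  obtain d where d: "d > 0" "\<And>x. x \<in> K \<Longrightarrow> dist x x0 < d \<Longrightarrow> dist (h x) (h x0) < h x0"
    using h(2) x0(2) pos unfolding continuous_on_iff by blast
  have "AE x in M. x \<notin> ball x0 d"
    using AE_concentrated_on[OF M] \<open>AE x in M. h x = 0\<close>
  proof eventually_elim
    case (elim x)
    thus ?case
      using d(2)[of x] by (auto simp: dist_commute dist_real_def)
  qed
  moreover have "ball x0 d \<in> sets M"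
    using M unfolding concentrated_on_def by simp
  ultimately have "emeasure M (ball x0 d) = 0"
    using space_concentrated_on[OF M] by (subst (asm) AE_iff_measurable) auto
  thus False
    using x0(1) d(1) unfolding msupp_def by blast
qed

lemma orthogonal_imp_many_zeros:
  fixes g :: "real \<Rightarrow> real"
  assumes M: "in_class_M M s {a..b}"
    and g: "g \<in> borel_measurable borel" "continuous_on {a..b} g"
    and orth: "\<And>q. degree q < N \<Longrightarrow> (\<integral>x. g x * poly q x \<partial>M) = 0"
  shows "\<exists>F. finite F \<and> F \<subseteq> {a..b} \<and> N \<le> card F \<and> (\<forall>x\<in>F. g x = 0)"
proof -
  define Zg where "Zg = {x\<in>{a..b}. g x = 0}"
  show ?thesis
  proof (cases "finite Zg \<and> card Zg < N")
    case False
    have "\<exists>F. finite F \<and> F \<subseteq> Zg \<and> N \<le> card F"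
    proof (cases "finite Zg")
      case True
      thus ?thesis
        using False by (intro exI[of _ Zg]) auto
    next
      case False
      thus ?thesis
        using infinite_arbitrarily_large[of Zg N] by (metis order_refl)
    qed
    thus ?thesis
      unfolding Zg_def by blast
  next
    case True
    have "g x \<noteq> 0" if "x \<in> {a<..<b} - Zg" for x
      using that unfolding Zg_def by auto
    then obtain q where q: "q \<noteq> 0" "degree q \<le> card Zg" "\<forall>x\<in>{a..b}. 0 \<le> poly q x * g x"
      using exists_poly_same_sign[of Zg a b g] True g(2) by blast
    have supp: "msupp M \<subseteq> {a..b}" "infinite (msupp M)"
      using M msupp_subset_if_in_class_M unfolding in_class_M_def by blast+
    have "poly q x * g x = 0" if "x \<in> msupp M" for x
    proof (rule nonneg_integral_eq_0_imp_vanishes_on_msupp[where h = "\<lambda>x. poly q x * g x"])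
      show "concentrated_on M {a..b}"
        using M by (rule in_class_M_concentrated_on)
      show "(\<lambda>x. poly q x * g x) \<in> borel_measurable borel"
        using g(1) by measurable
      show "continuous_on {a..b} (\<lambda>x. poly q x * g x)"
        using g(2) by (intro continuous_intros)
      show "(\<integral>x. poly q x * g x \<partial>M) = 0"
        using orth[of q] q(2) True by (simp add: mult.commute)
    qed (use q(3) that supp in auto)
    hence "msupp M \<subseteq> Zg \<union> {x. poly q x = 0}"
      using supp(1) unfolding Zg_def by auto
    moreover have "finite (Zg \<union> {x. poly q x = 0})"
      using True poly_roots_finite[OF q(1)] by simp
    ultimately show ?thesis
      using supp(2) finite_subset by blast
  qed
qed

lemma integral_mult_poly_eq_0:
  fixes g :: "real \<Rightarrow> real"
  assumes "\<And>t. integrable M (\<lambda>x. g x * x ^ t)" "\<And>t. t < N \<Longrightarrow> (\<integral>x. g x * x ^ t \<partial>M) = 0"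
    and "degree q < N"
  shows "(\<integral>x. g x * poly q x \<partial>M) = 0"
proof -
  have "(\<integral>x. g x * poly q x \<partial>M) = (\<integral>x. (\<Sum>t\<le>degree q. coeff q t * (g x * x ^ t)) \<partial>M)"
    unfolding poly_altdef by (simp add: sum_distrib_left mult_ac)
  also have "\<dots> = (\<Sum>t\<le>degree q. coeff q t * (\<integral>x. g x * x ^ t \<partial>M))"
    using assms(1) by simp
  also have "\<dots> = 0"
    using assms(2,3) by simp
  finally show ?thesis .
qed

text \<open>Coefficient \<open>i\<close> of the remainder is \<open>lead_coeff w\<close> times the moment of order
  \<open>degree w - 1 - i\<close> plus a combination of lower moments, so the moments vanish one by one.\<close>

lemma moments_eq_0_if_cauchy_remainder_low:
  fixes g :: "real \<Rightarrow> real"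
  assumes int: "\<And>t. integrable M (\<lambda>x. g x * x ^ t)"
    and low: "\<And>i. n0 \<le> i \<Longrightarrow> coeff (cauchy_remainder M w g) i = 0"
    and t: "t < degree w - n0"
  shows "(\<integral>x. g x * x ^ t \<partial>M) = 0"
  using t
proof (induction t rule: less_induct)
  case (less t)
  define d where "d = degree w"
  define i where "i = d - Suc t"
  have i: "n0 \<le> i" "i < d" "d - Suc i = t"
    using less.prems unfolding i_def d_def by auto
  have "0 = (\<integral>x. g x * diff_quot_coeff w i x \<partial>M)"
    using low[OF i(1)] i(2) unfolding coeff_cauchy_remainder d_def by simp
  also have "\<dots> = (\<integral>x. (\<Sum>j\<in>{Suc i..d}. coeff w j * (g x * x ^ (j - Suc i))) \<partial>M)"
    unfolding diff_quot_coeff_def d_def by (simp add: sum_distrib_left mult_ac)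
  also have "\<dots> = (\<Sum>j\<in>{Suc i..d}. coeff w j * (\<integral>x. g x * x ^ (j - Suc i) \<partial>M))"
    using int by (subst Bochner_Integration.integral_sum) auto
  also have "\<dots> = coeff w d * (\<integral>x. g x * x ^ t \<partial>M)"
  proof -
    have "{Suc i..d} = insert d {Suc i..<d}"
      using i by auto
    moreover have "(\<integral>x. g x * x ^ (j - Suc i) \<partial>M) = 0" if "j \<in> {Suc i..<d}" for j
      using that i less.IH[of "j - Suc i"] less.prems unfolding d_def by auto
    ultimately show ?thesis
      using i by simp
  qed
  finally show ?case
    using less.prems unfolding d_def by auto
qed

lemma many_zeros_if_cauchy_remainder_low:
  fixes g :: "real \<Rightarrow> real"
  assumes M: "in_class_M M s {a..b}" and g: "g \<in> borel_measurable borel" "continuous_on {a..b} g"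
    and low: "\<And>i. n \<le> i \<Longrightarrow> coeff (cauchy_remainder M w g) i = 0"
  shows "\<exists>F. finite F \<and> F \<subseteq> {a..b} \<and> degree w - n \<le> card F \<and> (\<forall>x\<in>F. g x = 0)"
proof -
  have int: "integrable M (\<lambda>x. g x * x ^ t)" for t
    using g in_class_M_concentrated_on[OF M]
    by (intro integrable_concentrated_on_continuous) (measurable, auto intro!: continuous_intros)
  have "(\<integral>x. g x * poly r x \<partial>M) = 0" if "degree r < degree w - n" for r
    using that int moments_eq_0_if_cauchy_remainder_low[OF int low]
    by (intro integral_mult_poly_eq_0[of M g "degree w - n"]) auto
  thus ?thesis
    by (rule orthogonal_imp_many_zeros[OF M g])
qed

lemma cauchy_remainder_low_if_zeros:
  fixes q :: "'i \<Rightarrow> real poly" and h :: "'i \<Rightarrow> real \<Rightarrow> real" and mult :: "complex \<Rightarrow> nat"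
  assumes M: "concentrated_on M K"
    and h: "\<And>i. i \<in> I \<Longrightarrow> h i \<in> borel_measurable borel" "\<And>i. i \<in> I \<Longrightarrow> continuous_on K (h i)"
    and deg_p: "p = 0 \<or> degree p < n" and deg_q: "\<And>i. i \<in> I \<Longrightarrow> degree (q i) \<le> n"
    and Z: "Z \<subseteq> - complex_of_real ` K"
      "\<And>z. z \<in> Z \<Longrightarrow> vanishes_to_order
         (\<lambda>z. cpoly p z + (\<Sum>i\<in>I. cpoly (q i) z * cauchy_transform M (\<lambda>x. complex_of_real (h i x)) z))
         z (mult z)"
    and w: "\<And>x. x \<in> K \<Longrightarrow> poly w x \<noteq> 0" "n < degree w"
      "\<And>z. z \<in> Z \<Longrightarrow> vanishes_to_order (cpoly w) z (mult z)"
      "\<And>D. degree D < degree w \<Longrightarrow> (\<And>z. z \<in> Z \<Longrightarrow> vanishes_to_order (cpoly D) z (mult z)) \<Longrightarrow> D = 0"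
    and i: "n \<le> i"
  shows "coeff (cauchy_remainder M w (\<lambda>x. (\<Sum>i\<in>I. poly (q i) x * h i x) / poly w x)) i = 0"
proof -
  define S where "S = - complex_of_real ` K"
  define L where "L z = cpoly p z + (\<Sum>i\<in>I. cpoly (q i) z * cauchy_transform M (\<lambda>x. complex_of_real (h i x)) z)" for z
  define g where "g x = (\<Sum>i\<in>I. poly (q i) x * h i x) / poly w x" for x
  have S: "open S"
    using M unfolding S_def concentrated_on_def
    by (intro open_Compl compact_imp_closed compact_continuous_image continuous_intros) auto
  have g: "g \<in> borel_measurable borel" "continuous_on K g"
    unfolding g_def using h w(1) by (measurable, auto intro!: continuous_intros)
  define P where "P = p + (\<Sum>i\<in>I. cauchy_remainder M (q i) (h i))"
  have P_low: "coeff P i = 0" if "n \<le> i" for i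
  proof -
    have "coeff p i = 0"
      using deg_p that by (auto intro: coeff_eq_0)
    moreover have "coeff (cauchy_remainder M (q j) (h j)) i = 0" if "j \<in> I" for j
      using deg_q[OF that] \<open>n \<le> i\<close> by (simp add: coeff_cauchy_remainder)
    ultimately show ?thesis
      unfolding P_def by (simp add: coeff_sum)
  qed
  define D where "D = P - cauchy_remainder M w g"
  have L_eq: "L z = cpoly w z * cauchy_transform M (\<lambda>x. complex_of_real (g x)) z + cpoly D z"
    if "z \<in> S" for z
  proof -
    have "z \<notin> complex_of_real ` K"
      using that unfolding S_def by simp
    from cauchy_transform_combination[OF M h w(1) this, where q = q] show ?thesis
      unfolding L_def D_def P_def g_def by (simp add: cpoly_add cpoly_diff)
  qed
  have "degree D < degree w"
    using P_low w(2) unfolding D_def by (intro degree_lessI) (auto simp: coeff_cauchy_remainder)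
  moreover have "vanishes_to_order (cpoly D) z (mult z)" if "z \<in> Z" for z
  proof (rule vanishes_to_order_decomposition[OF S _ _ _ _ _ L_eq _ w(3)])
    show "L holomorphic_on S"
      unfolding L_def S_def using h holomorphic_on_cauchy_transform[OF M] by (intro holomorphic_intros) auto
    show "cauchy_transform M (\<lambda>x. complex_of_real (g x)) holomorphic_on S"
      unfolding S_def using g by (intro holomorphic_on_cauchy_transform[OF M]) (auto intro: continuous_intros)
    show "vanishes_to_order L z (mult z)"
      unfolding L_def[abs_def] using Z(2) that .
  qed (use that Z(1) in \<open>auto intro: holomorphic_intros simp: S_def\<close>)
  ultimately have "D = 0"
    by (rule w(4))
  thus ?thesis
    using P_low[OF i] unfolding D_def g_def by simp
qed

lemma cauchy_form_zeros_imp_real_zeros: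
  fixes q :: "'i \<Rightarrow> real poly" and h :: "'i \<Rightarrow> real \<Rightarrow> real"
  assumes M: "in_class_M M s {a..b}"
    and h: "\<And>i. i \<in> I \<Longrightarrow> h i \<in> borel_measurable borel" "\<And>i. i \<in> I \<Longrightarrow> continuous_on {a..b} (h i)"
    and deg_p: "p = 0 \<or> degree p < n" and deg_q: "\<And>i. i \<in> I \<Longrightarrow> degree (q i) \<le> n"
    and zeros: "at_least_zeros
        (\<lambda>z. cpoly p z + (\<Sum>i\<in>I. cpoly (q i) z * cauchy_transform M (\<lambda>x. complex_of_real (h i x)) z))
        (UNIV - complex_of_real ` {a..b}) N"
  shows "\<exists>F. finite F \<and> F \<subseteq> {a..b} \<and> N - n \<le> card F \<and> (\<forall>x\<in>F. (\<Sum>i\<in>I. poly (q i) x * h i x) = 0)"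
proof (cases "N \<le> n")
  case True
  thus ?thesis
    by (intro exI[of _ "{}"]) simp
next
  case False
  obtain Z mult where Z: "finite Z" "Z \<subseteq> - complex_of_real ` {a..b}" "N \<le> (\<Sum>z\<in>Z. mult z)"
      "\<And>z. z \<in> Z \<Longrightarrow> vanishes_to_order
         (\<lambda>z. cpoly p z + (\<Sum>i\<in>I. cpoly (q i) z * cauchy_transform M (\<lambda>x. complex_of_real (h i x)) z))
         z (mult z)"
    using zeros unfolding at_least_zeros_iff_vanishes_to_order by (auto simp: Compl_eq_Diff_UNIV)
  obtain w where w: "w \<noteq> 0" "(\<Sum>z\<in>Z. mult z) \<le> degree w" "\<And>x. poly w x = 0 \<Longrightarrow> complex_of_real x \<in> Z"
      "\<And>z. z \<in> Z \<Longrightarrow> vanishes_to_order (cpoly w) z (mult z)"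
      "\<And>D. degree D < degree w \<Longrightarrow> (\<And>z. z \<in> Z \<Longrightarrow> vanishes_to_order (cpoly D) z (mult z)) \<Longrightarrow> D = 0"
    using real_poly_with_zeros[OF Z(1)] by blast
  have w_nz: "poly w x \<noteq> 0" if "x \<in> {a..b}" for x
    using w(3)[of x] Z(2) that by auto
  define R where "R x = (\<Sum>i\<in>I. poly (q i) x * h i x)" for x
  have "n < degree w"
    using False w(2) Z(3) by linarith
  hence low: "coeff (cauchy_remainder M w (\<lambda>x. R x / poly w x)) i = 0" if "n \<le> i" for i
    unfolding R_def
    using cauchy_remainder_low_if_zeros[where I = I and h = h and q = q and mult = mult and w = w,
        OF in_class_M_concentrated_on[OF M] h deg_p deg_q Z(2,4) w_nz _ w(4,5) that] by blast
  have g: "(\<lambda>x. R x / poly w x) \<in> borel_measurable borel" "continuous_on {a..b} (\<lambda>x. R x / poly w x)"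
    unfolding R_def using h w_nz by (measurable, auto intro!: continuous_intros)
  obtain F where F: "finite F" "F \<subseteq> {a..b}" "degree w - n \<le> card F" "\<forall>x\<in>F. R x / poly w x = 0"
    using many_zeros_if_cauchy_remainder_low[OF M g low] by blast
  have "R x = 0" if "x \<in> F" for x
  proof -
    have "poly w x \<noteq> 0"
      using F(2) that w_nz by blast
    thus ?thesis
      using F(4) that by fastforce
  qed
  moreover have "N - n \<le> card F"
    using F(3) w(2) Z(3) by linarith
  ultimately show ?thesis
    using F(1,2) unfolding R_def by blast
qed

section \<open>Nikishin systems\<close>

declare nik.simps [simp del]

lemma nik_less:
  "j < k \<Longrightarrow>
     nik \<mu> c j k z = complex_of_real (c j) * cauchy_transform (\<mu> j) (\<lambda>x. nik \<mu> c (Suc j) k (complex_of_real x)) z"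
  by (subst nik.simps) (simp add: cauchy_transform_def)

lemma nik_self: "nik \<mu> c k k z = complex_of_real (c k) * cauchy_transform (\<mu> k) (\<lambda>x. 1) z"
  by (subst nik.simps) (simp add: cauchy_transform_def)

lemma Im_nik_of_real: "Im (nik \<mu> c j k (complex_of_real x)) = 0"
proof (induction "k - j" arbitrary: j x)
  case 0
  thus ?case
    using Im_cauchy_transform_of_real[of "\<lambda>x. 1"] by (subst nik.simps) (auto simp: cauchy_transform_def)
next
  case (Suc d)
  thus ?case
    using Im_cauchy_transform_of_real[of "\<lambda>x. nik \<mu> c (Suc j) k (complex_of_real x)"]
    by (simp add: nik_less)
qed

lemma nik_measurable_holomorphic:
  assumes disjoint: "\<And>j. 1 \<le> j \<Longrightarrow> j < m \<Longrightarrow> {a j..b j} \<inter> {a (Suc j)..b (Suc j)} = {}"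
    and in_class: "\<And>j. 1 \<le> j \<Longrightarrow> j \<le> m \<Longrightarrow> in_class_M (\<mu> j) (c j) {a j..b j}"
    and "k \<le> m" "1 \<le> j" "j \<le> k"
  shows "(\<lambda>x. nik \<mu> c j k (complex_of_real x)) \<in> borel_measurable borel
         \<and> nik \<mu> c j k holomorphic_on - complex_of_real ` {a j..b j}"
  using \<open>j \<le> k\<close> \<open>1 \<le> j\<close>
proof (induction j rule: inc_induct)
  case base
  have M: "concentrated_on (\<mu> k) {a k..b k}"
    using in_class_M_concentrated_on[OF in_class[of k]] base \<open>k \<le> m\<close> by simp
  show ?case
    unfolding nik_self
    using M borel_measurable_cauchy_transform_of_real[of "\<mu> k" "\<lambda>x. 1"]
      holomorphic_on_cauchy_transform[OF M, of "\<lambda>x. 1"]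
    unfolding concentrated_on_def by (auto intro!: holomorphic_intros)
next
  case (step j)
  have M: "concentrated_on (\<mu> j) {a j..b j}"
    using in_class_M_concentrated_on[OF in_class[of j]] step \<open>k \<le> m\<close> by simp
  have IH: "(\<lambda>x. nik \<mu> c (Suc j) k (complex_of_real x)) \<in> borel_measurable borel"
      "nik \<mu> c (Suc j) k holomorphic_on - complex_of_real ` {a (Suc j)..b (Suc j)}"
    using step by auto
  have "complex_of_real ` {a j..b j} \<subseteq> - complex_of_real ` {a (Suc j)..b (Suc j)}"
    using disjoint[of j] step \<open>k \<le> m\<close> by auto
  hence "continuous_on (complex_of_real ` {a j..b j}) (nik \<mu> c (Suc j) k)"
    using IH(2) by (meson holomorphic_on_imp_continuous_on holomorphic_on_subset)
  hence "continuous_on {a j..b j} (\<lambda>x. nik \<mu> c (Suc j) k (complex_of_real x))"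
    by (rule continuous_on_compose2[where f = complex_of_real]) (auto intro: continuous_intros)
  thus ?case
    unfolding nik_less[OF step(2)]
    using M IH(1) borel_measurable_cauchy_transform_of_real holomorphic_on_cauchy_transform[OF M IH(1)]
    unfolding concentrated_on_def by (auto intro!: holomorphic_intros)
qed

text \<open>\<open>nik_density \<mu> c k\<close> is the density of \<open>s\<^sub>1\<^sub>,\<^sub>k\<close> with respect to \<open>\<mu> 1\<close>, namely
  \<open>c 1 * \<hat>s\<^sub>2\<^sub>,\<^sub>k\<close> with \<open>\<hat>s\<^sub>2\<^sub>,\<^sub>1 = 1\<close>; it is real-valued on the real line.\<close>

definition nik_density :: "(nat \<Rightarrow> real measure) \<Rightarrow> (nat \<Rightarrow> real) \<Rightarrow> nat \<Rightarrow> real \<Rightarrow> real" where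
  "nik_density \<mu> c k x = c 1 * (if k = 1 then 1 else Re (nik \<mu> c 2 k (complex_of_real x)))"

lemma nik_one_eq_cauchy_transform:
  assumes "1 \<le> k"
  shows "nik \<mu> c 1 k z = cauchy_transform (\<mu> 1) (\<lambda>x. complex_of_real (nik_density \<mu> c k x)) z"
proof (cases "k = 1")
  case True
  have "cauchy_transform (\<mu> 1) (\<lambda>x. complex_of_real (c 1)) z
      = complex_of_real (c 1) * cauchy_transform (\<mu> 1) (\<lambda>x. 1) z"
    unfolding cauchy_transform_def by (subst integral_mult_right_zero[symmetric]) simp
  thus ?thesis
    using True nik_self[of \<mu> c 1 z] unfolding nik_density_def by simp
next
  case False
  have "nik \<mu> c 1 k z = complex_of_real (c 1) * cauchy_transform (\<mu> 1) (\<lambda>x. nik \<mu> c 2 k (complex_of_real x)) z"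
    using nik_less[of 1 k \<mu> c z] False assms by (simp add: numeral_2_eq_2)
  also have "\<dots> = cauchy_transform (\<mu> 1) (\<lambda>x. complex_of_real (c 1) * nik \<mu> c 2 k (complex_of_real x)) z"
    unfolding cauchy_transform_def by (subst integral_mult_right_zero[symmetric]) simp
  also have "\<dots> = cauchy_transform (\<mu> 1) (\<lambda>x. complex_of_real (nik_density \<mu> c k x)) z"
  proof -
    have "complex_of_real (c 1) * nik \<mu> c 2 k (complex_of_real x) = complex_of_real (nik_density \<mu> c k x)" for x
      using False Im_nik_of_real[of \<mu> c 2 k x] unfolding nik_density_def by (simp add: complex_eq_iff)
    thus ?thesis
      by simp
  qed
  finally show ?thesis .
qed

lemma reduced_form_of_real_eq_0_iff:
  assumes "1 \<le> m" "c 1 \<noteq> 0"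
  shows "cpoly (p 1) (complex_of_real x)
           + (\<Sum>k=2..m. cpoly (p k) (complex_of_real x) * nik \<mu> c 2 k (complex_of_real x)) = 0
         \<longleftrightarrow> (\<Sum>k=1..m. poly (p k) x * nik_density \<mu> c k x) = 0" (is "?r = 0 \<longleftrightarrow> ?s = 0")
proof -
  have "nik \<mu> c 2 k (complex_of_real x) = complex_of_real (Re (nik \<mu> c 2 k (complex_of_real x)))" for k
    using Im_nik_of_real[of \<mu> c 2 k x] by (simp add: complex_eq_iff)
  moreover have "{1..m} = insert 1 {2..m}"
    using assms(1) by auto
  ultimately have "complex_of_real ?s = complex_of_real (c 1) * ?r"
    unfolding nik_density_def by (simp add: sum_distrib_left distrib_left cpoly_of_real mult_ac)
  hence "?s = 0 \<longleftrightarrow> complex_of_real (c 1) * ?r = 0"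
    by (metis of_real_eq_0_iff)
  thus ?thesis
    using assms(2) by simp
qed

lemma nik_density_measurable_continuous:
  assumes disjoint: "\<And>j. 1 \<le> j \<Longrightarrow> j < m \<Longrightarrow> {a j..b j} \<inter> {a (Suc j)..b (Suc j)} = {}"
    and in_class: "\<And>j. 1 \<le> j \<Longrightarrow> j \<le> m \<Longrightarrow> in_class_M (\<mu> j) (c j) {a j..b j}"
    and k: "1 \<le> k" "k \<le> m"
  shows "nik_density \<mu> c k \<in> borel_measurable borel \<and> continuous_on {a 1..b 1} (nik_density \<mu> c k)"
proof (cases "k = 1")
  case False
  have nik2: "(\<lambda>x. nik \<mu> c 2 k (complex_of_real x)) \<in> borel_measurable borel"
      "nik \<mu> c 2 k holomorphic_on - complex_of_real ` {a 2..b 2}"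
    using nik_measurable_holomorphic[where m = m and a = a and b = b and \<mu> = \<mu> and c = c and j = 2,
        OF disjoint in_class k(2)] False k by auto
  have "complex_of_real ` {a 1..b 1} \<subseteq> - complex_of_real ` {a 2..b 2}"
    using disjoint[of 1] False k by (auto simp: numeral_2_eq_2)
  hence "continuous_on (complex_of_real ` {a 1..b 1}) (nik \<mu> c 2 k)"
    using nik2(2) by (meson holomorphic_on_imp_continuous_on holomorphic_on_subset)
  hence "continuous_on {a 1..b 1} (\<lambda>x. nik \<mu> c 2 k (complex_of_real x))"
    by (rule continuous_on_compose2[where f = complex_of_real]) (auto intro: continuous_intros)
  thus ?thesis
    using nik2(1) False unfolding nik_density_def[abs_def] by (auto intro!: continuous_intros)
qed (simp add: nik_density_def[abs_def])

theorem lemma2: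
  fixes m :: nat and \<mu> :: "nat \<Rightarrow> real measure" and c :: "nat \<Rightarrow> real"
    and a b :: "nat \<Rightarrow> real" and n :: "nat \<Rightarrow> nat" and p :: "nat \<Rightarrow> real poly"
  assumes "m \<ge> 1"
    and "\<And>j. 1 \<le> j \<Longrightarrow> j \<le> m \<Longrightarrow> a j < b j"
    and "\<And>j. 1 \<le> j \<Longrightarrow> j < m \<Longrightarrow> {a j..b j} \<inter> {a (Suc j)..b (Suc j)} = {}"
    and "\<And>j. 1 \<le> j \<Longrightarrow> j \<le> m \<Longrightarrow> in_class_M (\<mu> j) (c j) {a j..b j}"
    and "\<And>k. k \<le> m \<Longrightarrow> p k = 0 \<or> degree (p k) < n k"
    and "\<And>k. 1 \<le> k \<Longrightarrow> k \<le> m \<Longrightarrow> int (n k) - 1 \<le> int (n 0)"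
    and "at_least_zeros
           (\<lambda>z. cpoly (p 0) z + (\<Sum>k=1..m. cpoly (p k) z * nik \<mu> c 1 k z))
           (UNIV - complex_of_real ` {a 1..b 1})
           (\<Sum>k\<le>m. n k)"
  shows "at_least_zeros
           (\<lambda>z. cpoly (p 1) z + (\<Sum>k=2..m. cpoly (p k) z * nik \<mu> c 2 k z))
           (UNIV - (if m \<ge> 2 then complex_of_real ` {a 2..b 2} else {}))
           ((\<Sum>k\<le>m. n k) - n 0)"
proof -
  have M: "in_class_M (\<mu> 1) (c 1) {a 1..b 1}" and "c 1 \<noteq> 0"
    using assms(1) assms(4)[of 1] unfolding in_class_M_def by auto
  have density: "nik_density \<mu> c k \<in> borel_measurable borel" "continuous_on {a 1..b 1} (nik_density \<mu> c k)"
    if "k \<in> {1..m}" for k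
    using nik_density_measurable_continuous[where m = m and a = a and b = b and \<mu> = \<mu> and c = c, OF assms(3,4)] that
    by auto
  have degree: "degree (p k) \<le> n 0" if "k \<in> {1..m}" for k
    using assms(5)[of k] assms(6)[of k] that by auto
  have L_eq: "(\<lambda>z. cpoly (p 0) z + (\<Sum>k=1..m. cpoly (p k) z * nik \<mu> c 1 k z)) =
      (\<lambda>z. cpoly (p 0) z + (\<Sum>k=1..m. cpoly (p k) z *
         cauchy_transform (\<mu> 1) (\<lambda>x. complex_of_real (nik_density \<mu> c k x)) z))"
    by (intro ext arg_cong2[where f = "(+)"] sum.cong refl) (metis atLeastAtMost_iff nik_one_eq_cauchy_transform)
  obtain F where F: "finite F" "F \<subseteq> {a 1..b 1}" "(\<Sum>k\<le>m. n k) - n 0 \<le> card F"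
      "\<forall>x\<in>F. (\<Sum>k=1..m. poly (p k) x * nik_density \<mu> c k x) = 0"
    using cauchy_form_zeros_imp_real_zeros[where I = "{1..m}" and h = "nik_density \<mu> c" and q = p,
        OF M density assms(5)[of 0] degree assms(7)[unfolded L_eq]] by auto
  show ?thesis
  proof (rule at_least_zeros_of_real_zeros[OF F(1) _ F(3)])
    show "complex_of_real ` F \<subseteq> UNIV - (if 2 \<le> m then complex_of_real ` {a 2..b 2} else {})"
      using F(2) assms(3)[of 1] by (auto simp: numeral_2_eq_2)
  qed (use F(4) reduced_form_of_real_eq_0_iff[where c = c, OF assms(1) \<open>c 1 \<noteq> 0\<close>] in blast)
qed

end
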